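(* Let $k\geq 3$, $A=\{0,1,\dots,k-1\}$ and $n=k-1$. Let $T\colon A^{n^2}\to A$ be the $n^2$-ary operation whose arguments are written as $x_{1,1},\dots,x_{1,n},x_{2,1},\dots,x_{2,n},\dots,x_{n,1},\dots,x_{n,n}$ (row by row), defined by $T(x_{1,1},\dots,x_{n,n})=1$ if $x_{i,j}=i$ for all $i,j\in\{1,\dots,n\}$ or $x_{i,j}=j$ for all $i,j\in\{1,\dots,n\}$, and $T(x_{1,1},\dots,x_{n,n})=0$ otherwise. Let $f\colon A^n\to A$ be given by $f(\mathbf{x})=1$ if $\mathbf{x}\in\{(1,2,\dots,n),(n,n-1,\dots,1)\}$ and $f(\mathbf{x})=0$ otherwise. For variables $x_{i,j}$ ($1\leq i,j\leq n$) write $\swarrow = (x_{1,n},x_{2,n-1},\dots,x_{n-1,2},x_{n,1})$, $\nearrow=(x_{n,1},x_{n-1,2},\dots,x_{2,n-1},x_{1,n})$, and for $1\leq i\leq n$: $\rightarrow_i=(x_{i,1},\dots,x_{i,n})$, $\leftarrow_i=(x_{i,n},\dots,x_{i,1})$, $\downarrow_i=(x_{1,i},\dots,x_{n,i})$, $\uparrow_i=(x_{n,i},\dots,x_{1,i})$; an expression $T(\mathbf{s}_1,\dots,\mathbf{s}_n)$ with $n$-tuples $\mathbf{s}_i$ means $T$ applied to the concatenation of these tuples. Then \[ \{(\swarrow,y)\in A^k : f(\swarrow)=y\} =\Bigl\{(\swarrow,y)\in A^k : \exists\, (x_{i,j})_{1\leq i,j\leq n,\ i+j\neq k}\in A\colon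 T(\rightarrow_1,\dots,\rightarrow_n)=y,\ T(\swarrow,\dots,\swarrow)=T(\rightarrow_1,\leftarrow_2,\dots,\leftarrow_n),\ T(\nearrow,\dots,\nearrow)=T(\downarrow_1,\uparrow_2,\dots,\uparrow_n)\Bigr\}, \] and this set also equals \[ \Bigl\{(\swarrow,y)\in A^k : \exists\, (x_{i,j})_{i+j\neq k}\in A\ \exists u,v\in A\colon T(\rightarrow_1,\dots,\rightarrow_n)=y\wedge T(\swarrow,\dots,\swarrow)=u\wedge T(\rightarrow_1,\leftarrow_2,\dots,\leftarrow_n)=u\wedge T(\nearrow,\dots,\nearrow)=v\wedge T(\downarrow_1,\uparrow_2,\dots,\uparrow_n)=v\Bigr\}. \] In particular the graph of $f$ is primitive positively definable from the graph of $T$.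
   Context: Here $(\swarrow,y)$ denotes the $k$-tuple $(x_{1,n},x_{2,n-1},\dots,x_{n,1},y)$; the variables $x_{i,j}$ with $i+j=k$ (the entries of $\swarrow$) are free and all other $x_{i,j}$ are existentially quantified. *)

theory Defs
  imports Main
begin

text \<open>Domain A = {0,...,k-1}; n = k-1. Tuples are lists of naturals.
  Matrix variables are x :: nat => nat => nat, used with 1-based indices 1..n.\<close>

definition dom_A :: "nat \<Rightarrow> nat set" where
  "dom_A k = {0..<k}"

definition T_op :: "nat \<Rightarrow> nat list \<Rightarrow> nat" where
  "T_op n xs =
     (if (\<forall>i\<in>{1..n}. \<forall>j\<in>{1..n}. xs ! ((i-1)*n + (j-1)) = i)
       \<or> (\<forall>i\<in>{1..n}. \<forall>j\<in>{1..n}. xs ! ((i-1)*n + (j-1)) = j)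
      then 1 else 0)"

definition f_op :: "nat \<Rightarrow> nat list \<Rightarrow> nat" where
  "f_op n xs = (if xs = [1..<n+1] \<or> xs = rev [1..<n+1] then 1 else 0)"

definition row_r :: "nat \<Rightarrow> (nat \<Rightarrow> nat \<Rightarrow> nat) \<Rightarrow> nat \<Rightarrow> nat list" where
  "row_r n x i = map (\<lambda>j. x i j) [1..<n+1]"
definition row_l :: "nat \<Rightarrow> (nat \<Rightarrow> nat \<Rightarrow> nat) \<Rightarrow> nat \<Rightarrow> nat list" where
  "row_l n x i = rev (row_r n x i)"
definition col_d :: "nat \<Rightarrow> (nat \<Rightarrow> nat \<Rightarrow> nat) \<Rightarrow> nat \<Rightarrow> nat list" where
  "col_d n x i = map (\<lambda>j. x j i) [1..<n+1]"
definition col_u :: "nat \<Rightarrow> (nat \<Rightarrow> nat \<Rightarrow> nat) \<Rightarrow> nat \<Rightarrow> nat list" where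
  "col_u n x i = rev (col_d n x i)"
definition diag_sw :: "nat \<Rightarrow> (nat \<Rightarrow> nat \<Rightarrow> nat) \<Rightarrow> nat list" where
  "diag_sw n x = map (\<lambda>i. x i (n + 1 - i)) [1..<n+1]"
definition diag_ne :: "nat \<Rightarrow> (nat \<Rightarrow> nat \<Rightarrow> nat) \<Rightarrow> nat list" where
  "diag_ne n x = rev (diag_sw n x)"

definition admissible :: "nat \<Rightarrow> nat list \<Rightarrow> (nat \<Rightarrow> nat \<Rightarrow> nat) \<Rightarrow> bool" where
  "admissible k x_d x \<longleftrightarrow>
     (\<forall>i\<in>{1..k-1}. \<forall>j\<in>{1..k-1}. x i j \<in> dom_A k) \<and> diag_sw (k-1) x = x_d"

end

theory Submission
  imports Defs
begin

(*
  T takes the value 1 exactly on the two matrices R = (i)_ij and C = (j)_ij.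
  Hence T(\<swarrow>,...,\<swarrow>) = 1 iff the anti-diagonal is (1,...,n), while T(->_1,<-_2,...,<-_n) = 1
  iff x = R or x is the matrix with first row (1,...,n) and all other rows (n,...,1).
  The latter has x_1n = n, so it is incompatible with the anti-diagonal (1,...,n); thus the
  first equation says: the anti-diagonal is (1,...,n) iff x = R, and x is not that exceptional
  matrix. The second equation is the first one for the transpose of x, so it says: the
  anti-diagonal is (n,...,1) iff x = C. Consequently T(->_1,...,->_n) = [x = R or x = C] = f(\<swarrow>).
  Conversely every anti-diagonal d extends to a solution: fill the rest of the matrix as in R,
  as in C, or with zeros, according as d is (1,...,n), (n,...,1), or neither.
*)

definition row_index_matrix :: "nat \<Rightarrow> (nat \<Rightarrow> nat \<Rightarrow> nat) \<Rightarrow> bool" where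
  "row_index_matrix n x \<longleftrightarrow> (\<forall>i\<in>{1..n}. \<forall>j\<in>{1..n}. x i j = i)"

definition col_index_matrix :: "nat \<Rightarrow> (nat \<Rightarrow> nat \<Rightarrow> nat) \<Rightarrow> bool" where
  "col_index_matrix n x \<longleftrightarrow> (\<forall>i\<in>{1..n}. \<forall>j\<in>{1..n}. x i j = j)"

definition rev_lower_rows :: "nat \<Rightarrow> (nat \<Rightarrow> nat \<Rightarrow> nat) \<Rightarrow> nat \<Rightarrow> nat \<Rightarrow> nat" where
  "rev_lower_rows n x i j = (if i = 1 then x i j else x i (n + 1 - j))"

lemma ball_atLeastAtMost_1_diff_iff: "(\<forall>j\<in>{1..n::nat}. P (j - 1)) \<longleftrightarrow> (\<forall>m<n. P m)"
proof -
  have "{1..n} = Suc ` {..<n}"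
    by (simp add: atLeastLessThanSuc_atLeastAtMost[symmetric] lessThan_atLeast0)
  then show ?thesis by auto
qed

lemma rev_upt_1: "rev [1..<n+1] = map (\<lambda>i. n + 1 - i) [1..<n+1]"
  by (simp add: list_eq_iff_nth_eq rev_nth Suc_diff_Suc del: upt_Suc)

lemma nth_concat_equal_length:
  assumes "\<forall>xs\<in>set xss. length xs = n" "i < length xss" "j < n"
  shows "concat xss ! (i * n + j) = xss ! i ! j"
  using assms(1,2)
proof (induction xss arbitrary: i)
  case (Cons xs xss)
  then show ?case
    using assms(3) by (cases i) (auto simp: nth_append)
qed simp

lemma row_index_matrixD: "row_index_matrix n x \<Longrightarrow> i \<in> {1..n} \<Longrightarrow> j \<in> {1..n} \<Longrightarrow> x i j = i"
  by (simp add: row_index_matrix_def)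

lemma col_index_matrixD: "col_index_matrix n x \<Longrightarrow> i \<in> {1..n} \<Longrightarrow> j \<in> {1..n} \<Longrightarrow> x i j = j"
  by (simp add: col_index_matrix_def)

lemma row_index_matrix_transpose: "row_index_matrix n (\<lambda>i j. x j i) \<longleftrightarrow> col_index_matrix n x"
  by (auto simp: row_index_matrix_def col_index_matrix_def)

lemma T_op_concat_rows:
  assumes "\<forall>i\<in>{1..n}. length (r i) = n"
  shows "T_op n (concat (map r [1..<n+1])) =
    of_bool (row_index_matrix n (\<lambda>i j. r i ! (j - 1)) \<or> col_index_matrix n (\<lambda>i j. r i ! (j - 1)))"
proof -
  have "concat (map r [1..<n+1]) ! ((i - 1) * n + (j - 1)) = r i ! (j - 1)"
    if "i \<in> {1..n}" "j \<in> {1..n}" for i j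
  proof -
    have "i - 1 < length (map r [1..<n+1])" "j - 1 < n" using that by auto
    then show ?thesis
      using that assms by (subst nth_concat_equal_length) (auto simp del: upt_Suc)
  qed
  then show ?thesis
    unfolding T_op_def row_index_matrix_def col_index_matrix_def by simp
qed

lemma length_row_r [simp]: "length (row_r n x i) = n"
  by (simp add: row_r_def)

lemma nth_row_r: "j < n \<Longrightarrow> row_r n x i ! j = x i (Suc j)"
  by (auto simp: row_r_def simp del: upt_Suc)

lemma T_op_rows:
  "T_op n (concat (map (row_r n x) [1..<n+1])) = of_bool (row_index_matrix n x \<or> col_index_matrix n x)"
proof -
  have "row_index_matrix n (\<lambda>i j. row_r n x i ! (j - 1)) \<longleftrightarrow> row_index_matrix n x"
    and "col_index_matrix n (\<lambda>i j. row_r n x i ! (j - 1)) \<longleftrightarrow> col_index_matrix n x"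
    unfolding row_index_matrix_def col_index_matrix_def by (force simp: nth_row_r)+
  then show ?thesis
    by (subst T_op_concat_rows) simp_all
qed

lemma eq_upt_1_iff_nth:
  assumes "length v = n"
  shows "v = [1..<n+1] \<longleftrightarrow> (\<forall>j\<in>{1..n}. v ! (j - 1) = j)"
  using assms ball_atLeastAtMost_1_diff_iff[of n "\<lambda>m. v ! m = Suc m"]
  by (simp add: list_eq_iff_nth_eq del: upt_Suc)

lemma T_op_concat_replicate:
  assumes "2 \<le> n" "length v = n"
  shows "T_op n (concat (replicate n v)) = of_bool (v = [1..<n+1])"
proof -
  have not_row: "\<not> row_index_matrix n (\<lambda>i j. v ! (j - 1))"
  proof
    assume "row_index_matrix n (\<lambda>i j. v ! (j - 1))"
    then have "\<forall>i\<in>{1..n}. v ! 0 = i"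
      using assms(1) unfolding row_index_matrix_def by force
    then have "v ! 0 = 1" "v ! 0 = 2"
      using assms(1) by auto
    then show False by simp
  qed
  have "col_index_matrix n (\<lambda>i j. v ! (j - 1)) \<longleftrightarrow> (\<forall>j\<in>{1..n}. v ! (j - 1) = j)"
    using assms(1) by (force simp: col_index_matrix_def)
  also have "\<dots> \<longleftrightarrow> v = [1..<n+1]"
    by (rule eq_upt_1_iff_nth[OF assms(2), symmetric])
  finally have col: "col_index_matrix n (\<lambda>i j. v ! (j - 1)) \<longleftrightarrow> v = [1..<n+1]" .
  have "replicate n v = map (\<lambda>_. v) [1..<n+1]"
    by (simp add: map_replicate_const del: upt_Suc)
  then show ?thesis
    using assms(2) not_row col by (simp only:) (subst T_op_concat_rows, simp_all)
qed

lemma row_l_eq_row_r_mirror: "row_l n x i = row_r n (\<lambda>i j. x i (n + 1 - j)) i"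
proof -
  have "rev (map (x i) [1..<n+1]) = map (\<lambda>j. x i (n + 1 - j)) [1..<n+1]"
    by (simp only: rev_map rev_upt_1 map_map comp_def)
  then show ?thesis
    by (simp add: row_l_def row_r_def del: upt_Suc)
qed

lemma concat_rows_rev_lower_rows:
  assumes "1 \<le> n"
  shows "row_r n x 1 @ concat (map (row_l n x) [2..<n+1])
    = concat (map (row_r n (rev_lower_rows n x)) [1..<n+1])"
proof -
  have upt: "[1..<n+1] = 1 # [2..<n+1]"
    using assms by (simp add: upt_conv_Cons numeral_2_eq_2 del: upt_Suc)
  have first: "row_r n (rev_lower_rows n x) 1 = row_r n x 1"
    by (simp add: row_r_def rev_lower_rows_def)
  have lower: "map (row_r n (rev_lower_rows n x)) [2..<n+1] = map (row_l n x) [2..<n+1]"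
    by (auto simp: row_l_eq_row_r_mirror row_r_def rev_lower_rows_def simp del: upt_Suc)
  show ?thesis
    unfolding upt by (simp only: list.map concat.simps first lower)
qed

lemma row_index_matrix_rev_lower_rows:
  "row_index_matrix n (rev_lower_rows n x) \<longleftrightarrow> row_index_matrix n x"
proof
  assume row: "row_index_matrix n (rev_lower_rows n x)"
  show "row_index_matrix n x"
    unfolding row_index_matrix_def
  proof (intro ballI)
    fix i j assume ij: "i \<in> {1..n}" "j \<in> {1..n}"
    moreover have "n + 1 - j \<in> {1..n}"
      using ij by auto
    ultimately have "rev_lower_rows n x i j = i" "rev_lower_rows n x i (n + 1 - j) = i"
      using row unfolding row_index_matrix_def by blast+
    then show "x i j = i"
      using ij by (auto simp: rev_lower_rows_def split: if_splits)
  qed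
next
  assume row: "row_index_matrix n x"
  show "row_index_matrix n (rev_lower_rows n x)"
    unfolding row_index_matrix_def
  proof (intro ballI)
    fix i j assume ij: "i \<in> {1..n}" "j \<in> {1..n}"
    then have "n + 1 - j \<in> {1..n}"
      by auto
    then show "rev_lower_rows n x i j = i"
      using row ij unfolding row_index_matrix_def rev_lower_rows_def by simp
  qed
qed

lemma col_index_matrix_rev_lower_rowsD:
  assumes "2 \<le> n" "col_index_matrix n (rev_lower_rows n x)"
  shows "x 1 n = n" "x 2 n = 1"
proof -
  have "rev_lower_rows n x 1 n = n" "rev_lower_rows n x 2 1 = 1"
    using assms unfolding col_index_matrix_def by auto
  then show "x 1 n = n" "x 2 n = 1"
    by (simp_all add: rev_lower_rows_def)
qed

lemma length_diag_sw [simp]: "length (diag_sw n x) = n"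
  by (simp add: diag_sw_def)

lemma nth_diag_sw: "m < n \<Longrightarrow> diag_sw n x ! m = x (Suc m) (n - m)"
  by (simp add: diag_sw_def del: upt_Suc)

lemma T_op_diag_condition_iff:
  assumes "2 \<le> n"
  shows "T_op n (concat (replicate n (diag_sw n x)))
      = T_op n (row_r n x 1 @ concat (map (row_l n x) [2..<n+1]))
    \<longleftrightarrow> (diag_sw n x = [1..<n+1] \<longleftrightarrow> row_index_matrix n x)
      \<and> \<not> col_index_matrix n (rev_lower_rows n x)"
proof -
  have "\<not> (diag_sw n x = [1..<n+1] \<and> col_index_matrix n (rev_lower_rows n x))"
  proof
    assume asm: "diag_sw n x = [1..<n+1] \<and> col_index_matrix n (rev_lower_rows n x)"
    have "x 1 n = diag_sw n x ! 0"
      using assms by (simp add: nth_diag_sw)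
    also have "\<dots> = 1"
      using asm assms by (simp del: upt_Suc)
    finally have "x 1 n = 1" .
    moreover have "x 1 n = n"
      using asm assms by (blast intro: col_index_matrix_rev_lower_rowsD(1))
    ultimately show False
      using assms by simp
  qed
  moreover have n_pos: "1 \<le> n"
    using assms by simp
  ultimately show ?thesis
    unfolding T_op_concat_replicate[OF assms length_diag_sw]
      concat_rows_rev_lower_rows[OF n_pos] T_op_rows row_index_matrix_rev_lower_rows
      of_bool_eq_iff
    by blast
qed

lemma col_d_eq_row_r_transpose: "col_d n x = row_r n (\<lambda>i j. x j i)"
  by (simp add: fun_eq_iff col_d_def row_r_def)

lemma col_u_eq_row_l_transpose: "col_u n x = row_l n (\<lambda>i j. x j i)"
  by (simp add: fun_eq_iff col_u_def row_l_def col_d_eq_row_r_transpose)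

lemma diag_sw_transpose: "diag_sw n (\<lambda>i j. x j i) = diag_ne n x"
proof -
  have "map (\<lambda>i. x (n + 1 - i) i) [1..<n+1]
      = map (\<lambda>i. x (n + 1 - i) (n + 1 - (n + 1 - i))) [1..<n+1]"
    by (intro map_cong) auto
  then show ?thesis
    by (simp only: diag_sw_def diag_ne_def rev_map rev_upt_1 map_map comp_def)
qed

lemma T_op_transposed_diag_condition_iff:
  assumes "2 \<le> n"
  shows "T_op n (concat (replicate n (diag_ne n x)))
      = T_op n (col_d n x 1 @ concat (map (col_u n x) [2..<n+1]))
    \<longleftrightarrow> (diag_sw n x = rev [1..<n+1] \<longleftrightarrow> col_index_matrix n x)
      \<and> \<not> col_index_matrix n (rev_lower_rows n (\<lambda>i j. x j i))"
proof -
  have "diag_ne n x = [1..<n+1] \<longleftrightarrow> diag_sw n x = rev [1..<n+1]"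
    unfolding diag_ne_def by (rule rev_swap)
  then show ?thesis
    unfolding col_d_eq_row_r_transpose col_u_eq_row_l_transpose diag_sw_transpose[symmetric]
      T_op_diag_condition_iff[OF assms] row_index_matrix_transpose
    by (simp only: diag_sw_transpose)
qed

lemma T_op_rows_eq_f_op_diag_sw:
  assumes "2 \<le> n"
    and "T_op n (concat (replicate n (diag_sw n x)))
      = T_op n (row_r n x 1 @ concat (map (row_l n x) [2..<n+1]))"
    and "T_op n (concat (replicate n (diag_ne n x)))
      = T_op n (col_d n x 1 @ concat (map (col_u n x) [2..<n+1]))"
  shows "T_op n (concat (map (row_r n x) [1..<n+1])) = f_op n (diag_sw n x)"
  using assms(2,3)
  unfolding T_op_diag_condition_iff[OF assms(1)] T_op_transposed_diag_condition_iff[OF assms(1)]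
    T_op_rows f_op_def
  by simp

lemma diag_sw_eq_iff:
  assumes "length d = n"
  shows "diag_sw n x = d \<longleftrightarrow> (\<forall>i\<in>{1..n}. x i (n + 1 - i) = d ! (i - 1))"
  using assms ball_atLeastAtMost_1_diff_iff[of n "\<lambda>m. x (Suc m) (n - m) = d ! m"]
  by (auto simp: list_eq_iff_nth_eq nth_diag_sw)

lemma upt_1_neq_rev:
  assumes "2 \<le> n"
  shows "[1..<n+1] \<noteq> rev [1..<n+1]"
proof
  assume "[1..<n+1] = rev [1..<n+1]"
  then have "[1..<n+1] ! 0 = rev [1..<n+1] ! 0"
    by (rule arg_cong)
  then show False
    using assms by (simp add: rev_nth del: upt_Suc)
qed

lemma admissible_witness:
  assumes "2 \<le> n" "length d = n" "set d \<subseteq> dom_A (n + 1)"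
  obtains x where "admissible (n + 1) d x"
    "d = [1..<n+1] \<longleftrightarrow> row_index_matrix n x"
    "d = rev [1..<n+1] \<longleftrightarrow> col_index_matrix n x"
    "x 2 n \<noteq> 1" "x n 2 \<noteq> 1"
proof -
  consider "d = [1..<n+1]" | "d = rev [1..<n+1]" | "d \<noteq> [1..<n+1]" "d \<noteq> rev [1..<n+1]"
    by blast
  then show ?thesis
  proof cases
    case 1
    let ?x = "\<lambda>i j. i"
    have "diag_sw n ?x = d"
      using 1 by (simp add: diag_sw_def)
    moreover have "\<not> col_index_matrix n ?x"
      using col_index_matrixD[of n ?x 1 2] assms(1) by auto
    ultimately show ?thesis
      using that[of ?x] 1 assms(1) upt_1_neq_rev[OF assms(1)]
      by (auto simp: admissible_def dom_A_def row_index_matrix_def)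
  next
    case 2
    let ?x = "\<lambda>i j. j"
    have "diag_sw n ?x = d"
      by (simp only: 2 diag_sw_def rev_upt_1)
    moreover have "\<not> row_index_matrix n ?x"
      using row_index_matrixD[of n ?x 1 2] assms(1) by auto
    ultimately show ?thesis
      using that[of ?x] 2 assms(1) upt_1_neq_rev[OF assms(1), symmetric]
      by (auto simp: admissible_def dom_A_def col_index_matrix_def)
  next
    case 3
    let ?x = "\<lambda>i j. if i + j = n + 1 then d ! (i - 1) else 0"
    have "diag_sw n ?x = d"
      using assms(2) by (simp add: diag_sw_eq_iff)
    moreover have "\<not> row_index_matrix n ?x" "\<not> col_index_matrix n ?x"
      using row_index_matrixD[of n ?x 1 1] col_index_matrixD[of n ?x 1 1] assms(1) by auto
    moreover have "?x i j \<in> dom_A (n + 1)" if "i \<in> {1..n}" for i j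
    proof -
      have "d ! (i - 1) \<in> set d"
        using that assms(2) by auto
      then show ?thesis
        using assms(3) by (auto simp: dom_A_def)
    qed
    ultimately show ?thesis
      using that[of ?x] 3 assms(1) by (auto simp: admissible_def)
  qed
qed

lemma bex_common_value_iff:
  "a \<in> A \<Longrightarrow> c \<in> A \<Longrightarrow>
    (\<exists>u\<in>A. \<exists>v\<in>A. P \<and> a = u \<and> b = u \<and> c = v \<and> e = v) \<longleftrightarrow> P \<and> a = b \<and> c = e"
  by auto

lemma f_op_eq_iff_T_op_system:
  assumes "2 \<le> n" "k = n + 1" "length d = n" "set d \<subseteq> dom_A k"
  shows "f_op n d = y \<longleftrightarrow> (\<exists>x. admissible k d x \<and>
    T_op n (concat (map (row_r n x) [1..<n+1])) = y \<and>
    T_op n (concat (replicate n (diag_sw n x)))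
      = T_op n (row_r n x 1 @ concat (map (row_l n x) [2..<n+1])) \<and>
    T_op n (concat (replicate n (diag_ne n x)))
      = T_op n (col_d n x 1 @ concat (map (col_u n x) [2..<n+1])))"
    (is "_ \<longleftrightarrow> (\<exists>x. admissible k d x \<and> ?rows x = y \<and> ?sw x \<and> ?ne x)")
proof
  assume f: "f_op n d = y"
  obtain x where adm: "admissible k d x"
    and row: "d = [1..<n+1] \<longleftrightarrow> row_index_matrix n x"
    and col: "d = rev [1..<n+1] \<longleftrightarrow> col_index_matrix n x"
    and "x 2 n \<noteq> 1" "x n 2 \<noteq> 1"
    using admissible_witness[OF assms(1,3)] assms(2,4) by blast
  then have "\<not> col_index_matrix n (rev_lower_rows n x)"
    "\<not> col_index_matrix n (rev_lower_rows n (\<lambda>i j. x j i))"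
    using col_index_matrix_rev_lower_rowsD(2)[OF assms(1)] by blast+
  moreover have diag: "diag_sw n x = d"
    using adm assms(2) by (simp add: admissible_def)
  ultimately have "?sw x" "?ne x"
    unfolding T_op_diag_condition_iff[OF assms(1)] T_op_transposed_diag_condition_iff[OF assms(1)]
    using row col by simp_all
  moreover have "?rows x = y"
    using T_op_rows_eq_f_op_diag_sw[OF assms(1) \<open>?sw x\<close> \<open>?ne x\<close>] diag f by simp
  ultimately show "\<exists>x. admissible k d x \<and> ?rows x = y \<and> ?sw x \<and> ?ne x"
    using adm by blast
next
  assume "\<exists>x. admissible k d x \<and> ?rows x = y \<and> ?sw x \<and> ?ne x"
  then obtain x where "admissible k d x" "?rows x = y" "?sw x" "?ne x"
    by blast
  moreover from this(1) have "diag_sw n x = d"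
    using assms(2) by (simp add: admissible_def)
  ultimately show "f_op n d = y"
    using T_op_rows_eq_f_op_diag_sw[OF assms(1)] by simp
qed

theorem theorem3p13:
  fixes k :: nat
  assumes "k \<ge> 3"
  defines "n \<equiv> k - 1"
  shows
    "{d @ [y] | d y. length d = n \<and> set d \<subseteq> dom_A k \<and> y \<in> dom_A k \<and> f_op n d = y}
     = {d @ [y] | d y. length d = n \<and> set d \<subseteq> dom_A k \<and> y \<in> dom_A k \<and>
          (\<exists>x. admissible k d x \<and>
               T_op n (concat (map (row_r n x) [1..<n+1])) = y \<and>
               T_op n (concat (replicate n (diag_sw n x)))
                 = T_op n (row_r n x 1 @ concat (map (row_l n x) [2..<n+1])) \<and>
               T_op n (concat (replicate n (diag_ne n x)))
                 = T_op n (col_d n x 1 @ concat (map (col_u n x) [2..<n+1])))}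
   \<and> {d @ [y] | d y. length d = n \<and> set d \<subseteq> dom_A k \<and> y \<in> dom_A k \<and> f_op n d = y}
     = {d @ [y] | d y. length d = n \<and> set d \<subseteq> dom_A k \<and> y \<in> dom_A k \<and>
          (\<exists>x. admissible k d x \<and> (\<exists>u\<in>dom_A k. \<exists>v\<in>dom_A k.
               T_op n (concat (map (row_r n x) [1..<n+1])) = y \<and>
               T_op n (concat (replicate n (diag_sw n x))) = u \<and>
               T_op n (row_r n x 1 @ concat (map (row_l n x) [2..<n+1])) = u \<and>
               T_op n (concat (replicate n (diag_ne n x))) = v \<and>
               T_op n (col_d n x 1 @ concat (map (col_u n x) [2..<n+1])) = v))}"
proof -
  have n: "2 \<le> n" "k = n + 1"
    using assms(1) unfolding n_def by auto
  have T_op_in_dom_A: "T_op n xs \<in> dom_A k" for xs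
    using assms(1) by (simp add: T_op_def dom_A_def)
  show ?thesis
    by (simp only: f_op_eq_iff_T_op_system[OF n] bex_common_value_iff T_op_in_dom_A simp_thms
        cong: conj_cong)
qed

end
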